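(* Let $U\subset\mathbb C$ be a convex domain bounded by a smooth Jordan curve, and let $f$ be holomorphic in a neighborhood of $\overline U$ with $\operatorname{Re}(f')>0$ in $U$ and $f(z)\ne z$ for all $z\in\partial U$. Let $\omega_f$ be the Buff form of $f$, $V^*=\{z\in U\cap f^{-1}(U): f(z)\ne z\}$, and define $$u_f(z)=-1+\int_{[z,f(z)]}\omega_f(s)\,ds\qquad(z\in V^* ).$$ If $p\in U$ is a fixed point of $f$, then $u_f$ extends holomorphically to $p$ with $u_f(p)=0$. Moreover, if $f'(p)=1$ and $p$ has fixed point multiplicity $q+1\ge2$, then $u_f$ has a zero of order $2q$ at $p$.
   Context: $\operatorname{Log}$ is the principal branch of the logarithm. The Buff form of $f$ is $\omega_f=\frac{f'(z)-1}{(f(z)-z)\operatorname{Log} f'(z)}\,dz$ (the factor $(f'-1)/\operatorname{Log}f'$ being $1$ where $f'=1$); it is meromorphic in $U$ with poles at the fixed points of $f$. For $z\in V^*$ the segment $[z,f(z)]$ lies in $U$ and contains no fixed point of $f$, so the integral is well defined. The fixed point multiplicity of $p$ is its multiplicity as a root of $f(z)-z$. *)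

theory Defs
  imports "HOL-Complex_Analysis.Complex_Analysis"
begin

text \<open>A smooth Jordan curve: the image of a 1-periodic, infinitely differentiable
  map from the reals with nowhere vanishing derivative, injective on one period.\<close>
definition smooth_jordan_curve :: "complex set \<Rightarrow> bool" where
  "smooth_jordan_curve C \<longleftrightarrow>
     (\<exists>D :: nat \<Rightarrow> real \<Rightarrow> complex.
        (\<forall>n t. (D n has_vector_derivative D (Suc n) t) (at t)) \<and>
        (\<forall>t. D 1 t \<noteq> 0) \<and>
        (\<forall>t. D 0 (t + 1) = D 0 t) \<and>
        inj_on (D 0) {0..<1} \<and>
        C = D 0 ` {0..1})"

definition buff_factor :: "complex \<Rightarrow> complex" where
  "buff_factor w = (if w = 1 then 1 else (w - 1) / Ln w)"

text \<open>Coefficient of the Buff form omega_f = (f' - 1) / ((f - z) Log f') dz.\<close>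
definition buff_form :: "(complex \<Rightarrow> complex) \<Rightarrow> complex \<Rightarrow> complex" where
  "buff_form f s = buff_factor (deriv f s) / (f s - s)"

definition buff_u :: "(complex \<Rightarrow> complex) \<Rightarrow> complex \<Rightarrow> complex" where
  "buff_u f z = -1 + contour_integral (linepath z (f z)) (buff_form f)"

definition Vstar :: "complex set \<Rightarrow> (complex \<Rightarrow> complex) \<Rightarrow> complex set" where
  "Vstar U f = {z \<in> U. f z \<in> U \<and> f z \<noteq> z}"

definition zero_of_order :: "(complex \<Rightarrow> complex) \<Rightarrow> complex \<Rightarrow> nat \<Rightarrow> bool" where
  "zero_of_order g p n \<longleftrightarrow>
     (\<exists>r>0. \<exists>h. h holomorphic_on ball p r \<and> h p \<noteq> 0 \<and>
        (\<forall>w\<in>ball p r. g w = (w - p) ^ n * h w))"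

end

theory Submission
  imports Defs
begin

(*
  Write h z = f z - z and parametrise the segment [z, f z] as seg z t = z + t h(z). Then
  u_f(z) = -1 + integral over [0,1] of B(f'(seg z t)) / R(z,t) dt, where B(w) = (w - 1) / Log w
  and R(z,t) = h(seg z t) / h(z).

  Near an isolated fixed point p, R(z,t) tends to 1 + t (lambda - 1) uniformly in t, where
  lambda = f'(p) has positive real part, and the integral of B(lambda) / (1 + t (lambda - 1))
  over [0,1] equals 1 because Log (1 + t (lambda - 1)) / Log lambda is a primitive. So u_f tends
  to 0 at p; as u_f is holomorphic on a punctured disc (differentiation under the integral),
  the singularity is removable. If p is not isolated, f is the identity near p and g = 0 works.

  If h = (z - p)^(q+1) e with e(p) /= 0, second-order Taylor expansions of B, h and h' give
  integrand = 1 + E(z,t) + O(|z - p|^(2q+1)) uniformly in t, with E quadratic in t and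
  integral h h'' / 12. Since h h'' ~ q (q+1) e(p)^2 (z - p)^(2q), the zero at p has order 2q.
*)

lemma norm_of_real_mult_le: "t \<in> {0..1} \<Longrightarrow> norm (of_real t * x) \<le> norm (x :: complex)"
  by (auto simp: norm_mult intro!: mult_left_le_one_le)

lemma has_field_derivative_power_Suc_minus:
  fixes c z :: complex
  shows "((\<lambda>w. (w - c) ^ Suc n) has_field_derivative of_nat (Suc n) * (z - c) ^ n) (at z)"
proof -
  have "((\<lambda>w. w - c) has_field_derivative 1) (at z)" by (auto intro!: derivative_eq_intros)
  from DERIV_power_Suc[OF this, of n] show ?thesis by simp
qed

lemma uniform_limit_isCont_compose:
  assumes lim: "uniform_limit S F (\<lambda>_. c) G" and cont: "isCont g c"
  shows "uniform_limit S (\<lambda>x y. g (F x y)) (\<lambda>_. g c) G"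
proof (rule uniform_limitI)
  fix e :: real assume "e > 0"
  then obtain d where "d > 0" and d: "\<And>y. dist y c < d \<Longrightarrow> dist (g y) (g c) < e"
    using cont unfolding continuous_at_eps_delta by blast
  show "\<forall>\<^sub>F x in G. \<forall>y\<in>S. dist (g (F x y)) (g c) < e"
    using uniform_limitD[OF lim \<open>d > 0\<close>] by eventually_elim (use d in blast)
qed

lemma holomorphic_on_ball_if_tendsto:
  assumes "g holomorphic_on ball p r - {p}" and "(g \<longlongrightarrow> g p) (at p)"
  shows "g holomorphic_on ball p r"
proof (rule no_isolated_singularity'[where K="{p}"])
  show "(g \<longlongrightarrow> g z) (at z within ball p r)" if "z \<in> {p}" for z
    using assms(2) that by (auto intro: tendsto_within_subset)
qed (use assms(1) in auto)

lemma zero_of_orderI_tendsto: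
  assumes "0 < r" and holo: "g holomorphic_on ball p r"
    and lim: "((\<lambda>z. g z / (z - p) ^ n) \<longlongrightarrow> c) (at p)" and "c \<noteq> 0"
  shows "zero_of_order g p n"
proof -
  define k where "k z = (if z = p then c else g z / (z - p) ^ n)" for z
  have "(\<lambda>z. g z / (z - p) ^ n) holomorphic_on ball p r - {p}"
    using holomorphic_on_subset[OF holo] by (intro holomorphic_intros) auto
  then have "k holomorphic_on ball p r - {p}"
    by (rule holomorphic_transform) (auto simp: k_def)
  moreover have "(k \<longlongrightarrow> c) (at p)"
    using lim by (rule Lim_transform_eventually) (auto simp: k_def eventually_at_filter)
  then have "(k \<longlongrightarrow> k p) (at p)" by (simp add: k_def)
  ultimately have k: "k holomorphic_on ball p r" by (rule holomorphic_on_ball_if_tendsto)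
  have "isCont g p"
    using holomorphic_on_imp_continuous_on[OF holo] \<open>0 < r\<close>
    by (simp add: continuous_on_eq_continuous_at)
  then have "(g \<longlongrightarrow> g p) (at p)" by (simp add: isCont_def)
  moreover have "((\<lambda>z. (z - p) ^ n * k z) \<longlongrightarrow> (p - p) ^ n * k p) (at p)"
    using \<open>(k \<longlongrightarrow> k p) (at p)\<close> by (intro tendsto_intros)
  then have "(g \<longlongrightarrow> (p - p) ^ n * k p) (at p)"
    by (rule Lim_transform_eventually) (auto simp: k_def eventually_at_filter)
  ultimately have "g p = (p - p) ^ n * k p" by (rule tendsto_unique[rotated]) simp
  then have "\<forall>w\<in>ball p r. g w = (w - p) ^ n * k w" by (auto simp: k_def)
  moreover have "k p \<noteq> 0" using \<open>c \<noteq> 0\<close> by (simp add: k_def)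
  ultimately show ?thesis
    unfolding zero_of_order_def using \<open>0 < r\<close> k by blast
qed

lemma not_zero_of_order_if_eventually_zero:
  assumes "\<forall>\<^sub>F z in at p. g z = 0"
  shows "\<not> zero_of_order g p n"
proof
  assume "zero_of_order g p n"
  then obtain r k where "0 < r" and k: "k holomorphic_on ball p r" "k p \<noteq> 0"
      and g: "\<forall>w\<in>ball p r. g w = (w - p) ^ n * k w"
    unfolding zero_of_order_def by blast
  have "isCont k p"
    using holomorphic_on_imp_continuous_on[OF k(1)] \<open>0 < r\<close>
    by (simp add: continuous_on_eq_continuous_at)
  then have "\<forall>\<^sub>F z in at p. k z \<noteq> 0"
    using \<open>k p \<noteq> 0\<close> by (simp add: isCont_def tendsto_imp_eventually_ne)
  moreover have "\<forall>\<^sub>F z in at p. z \<in> ball p r \<and> z \<noteq> p"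
    using \<open>0 < r\<close> by (auto simp: eventually_at dist_commute intro!: exI[of _ r])
  ultimately have "\<forall>\<^sub>F z in at p. False"
    using assms by eventually_elim (use g in auto)
  then show False by simp
qed

lemma holomorphic_Taylor_bound:
  assumes "g holomorphic_on S" "open S" "convex C" "C \<subseteq> S"
    and "\<And>x. x \<in> C \<Longrightarrow> norm ((deriv ^^ Suc n) g x) \<le> B" and "z \<in> C" "w \<in> C"
  shows "norm (g w - (\<Sum>i\<le>n. (deriv ^^ i) g z * (w - z) ^ i / fact i))
           \<le> B * norm (w - z) ^ Suc n / fact n"
proof -
  have "((deriv ^^ i) g has_field_derivative (deriv ^^ Suc i) g x) (at x within C)"
    if "x \<in> C" for i x
    using has_field_derivative_higher_deriv[OF assms(1,2)] that assms(4)
    by (blast intro: has_field_derivative_at_within)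
  from complex_Taylor[OF assms(3) this assms(5-7)] show ?thesis by simp
qed

lemma continuous_on_bounded_near:
  fixes g :: "complex \<Rightarrow> complex"
  assumes "continuous_on S g" "open S" "p \<in> S"
  obtains r M where "0 < r" "cball p r \<subseteq> S" "\<And>x. x \<in> cball p r \<Longrightarrow> norm (g x) \<le> M"
proof -
  obtain d where "0 < d" "ball p d \<subseteq> S" using assms(2,3) open_contains_ball by blast
  then have sub: "cball p (d/2) \<subseteq> S" by (auto simp: subset_iff)
  have "compact (g ` cball p (d/2))"
    by (rule compact_continuous_image[OF continuous_on_subset[OF assms(1) sub] compact_cball])
  then obtain M where "\<And>y. y \<in> g ` cball p (d/2) \<Longrightarrow> norm y \<le> M"
    using compact_imp_bounded bounded_iff by metis
  then show ?thesis using that[of "d/2" M] \<open>0 < d\<close> sub by auto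
qed

section \<open>The Buff factor\<close>

lemma tendsto_buff_factor_1: "(buff_factor \<longlongrightarrow> 1) (at 1)"
proof -
  have "((\<lambda>y. (Ln y - Ln 1) / (y - 1)) \<longlongrightarrow> 1) (at 1)"
    using has_field_derivative_Ln[of 1] by (simp add: has_field_derivative_iff)
  then have "((\<lambda>y. inverse (Ln y / (y - 1))) \<longlongrightarrow> inverse 1) (at 1)"
    by (intro tendsto_inverse) auto
  moreover have "\<forall>\<^sub>F y in at 1. inverse (Ln y / (y - 1)) = buff_factor y"
    by (auto simp: eventually_at_filter buff_factor_def)
  ultimately show ?thesis
    by (auto intro: Lim_transform_eventually)
qed

lemma not_nonpos_Reals_if_Re_pos: "0 < Re w \<Longrightarrow> w \<notin> \<real>\<^sub>\<le>\<^sub>0"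
  by (auto simp: nonpos_Reals_def)

lemma holomorphic_on_buff_factor: "buff_factor holomorphic_on {w. 0 < Re w}"
proof (rule no_isolated_singularity'[where K="{1}"])
  show "(buff_factor \<longlongrightarrow> buff_factor z) (at z within {w. 0 < Re w})" if "z \<in> {1}" for z
    using that tendsto_buff_factor_1 by (auto simp: buff_factor_def intro: tendsto_within_subset)
  have "(\<lambda>w. (w - 1) / Ln w) holomorphic_on {w. 0 < Re w} - {1}"
    by (intro holomorphic_intros) (auto dest: not_nonpos_Reals_if_Re_pos)
  then show "buff_factor holomorphic_on {w. 0 < Re w} - {1}"
    by (rule holomorphic_transform) (auto simp: buff_factor_def)
qed (auto simp: open_halfspace_Re_gt)

lemma Re_segment_from_1_ge:
  assumes "t \<in> {0..1}"
  shows "min 1 (Re a) \<le> Re (1 + of_real t * (a - 1))"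
proof -
  have "(1 - t) * min 1 (Re a) + t * min 1 (Re a) \<le> (1 - t) * 1 + t * Re a"
    using assms by (intro add_mono mult_left_mono) auto
  then show ?thesis by (simp add: algebra_simps)
qed

lemma buff_factor_div_segment_has_integral:
  assumes "0 < Re a"
  shows "((\<lambda>t. buff_factor a / (1 + of_real t * (a - 1))) has_integral 1) {0..1}"
proof (cases "a = 1")
  case True
  then show ?thesis using has_integral_const_real[of "1::complex" 0 1] by (simp add: buff_factor_def)
next
  case False
  have "Ln a \<noteq> 0" using False assms by (auto dest: not_nonpos_Reals_if_Re_pos)
  define F where "F x = Ln (1 + x * (a - 1)) / Ln a" for x :: complex
  have "(F has_field_derivative buff_factor a / (1 + of_real t * (a - 1))) (at (of_real t))"
    if "t \<in> {0..1}" for t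
  proof -
    have np: "1 + of_real t * (a - 1) \<notin> \<real>\<^sub>\<le>\<^sub>0"
      using Re_segment_from_1_ge[OF that, of a] assms
      by (intro not_nonpos_Reals_if_Re_pos) linarith
    have affine: "((\<lambda>x. 1 + x * (a - 1)) has_field_derivative (a - 1)) (at (of_real t))"
      by (auto intro!: derivative_eq_intros)
    from DERIV_chain2[OF has_field_derivative_Ln[OF np] affine]
    have "((\<lambda>x. Ln (1 + x * (a - 1))) has_field_derivative
        inverse (1 + of_real t * (a - 1)) * (a - 1)) (at (of_real t))"
      by simp
    from DERIV_cdivide[OF this, of "Ln a"] show ?thesis
      unfolding F_def buff_factor_def using False by (simp add: field_simps)
  qed
  then have "((\<lambda>t. buff_factor a / (1 + of_real t * (a - 1))) has_integral F (of_real 1) - F (of_real 0)) {0..1}"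
    by (intro fundamental_theorem_of_calculus) (auto intro!: has_vector_derivative_real_field)
  moreover have "F (of_real 1) - F (of_real 0) = 1" using \<open>Ln a \<noteq> 0\<close> by (simp add: F_def)
  ultimately show ?thesis by simp
qed

definition Ln_deriv :: "nat \<Rightarrow> complex \<Rightarrow> complex" where
  "Ln_deriv i w = (if i = 0 then Ln w else (-1) ^ (i - 1) * fact (i - 1) * inverse w ^ i)"

lemma has_field_derivative_Ln_deriv:
  assumes "w \<notin> \<real>\<^sub>\<le>\<^sub>0"
  shows "(Ln_deriv i has_field_derivative Ln_deriv (Suc i) w) (at w)"
proof (cases i)
  case 0
  have "Ln_deriv 0 = Ln" by (simp add: fun_eq_iff Ln_deriv_def)
  then show ?thesis using has_field_derivative_Ln[OF assms] 0 by (simp add: Ln_deriv_def)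
next
  case (Suc k)
  have "w \<noteq> 0" using assms by auto
  have "Ln_deriv (Suc k) = (\<lambda>w. (-1) ^ k * fact k * inverse w ^ Suc k)"
    by (simp add: fun_eq_iff Ln_deriv_def)
  moreover have "(inverse has_field_derivative - (inverse w * inverse w)) (at w)"
    using \<open>w \<noteq> 0\<close> by (auto intro!: derivative_eq_intros)
  from DERIV_cmult[OF DERIV_power_Suc[OF this, of k], of "(-1) ^ k * fact k"]
  have "((\<lambda>w. (-1) ^ k * fact k * inverse w ^ Suc k) has_field_derivative Ln_deriv (Suc i) w) (at w)"
    using Suc by (simp add: Ln_deriv_def algebra_simps)
  ultimately show ?thesis using Suc by simp
qed


lemma Re_ge_half_if_in_cball_1_half:
  assumes "w \<in> cball 1 (1/2)"
  shows "1/2 \<le> Re w" "1/2 \<le> norm w"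
proof -
  have "norm (1 - w) \<le> 1/2" using assms by (simp add: dist_norm)
  then have "Re (1 - w) \<le> 1/2" using complex_Re_le_cmod[of "1 - w"] by linarith
  then show "1/2 \<le> Re w" by simp
  then show "1/2 \<le> norm w" using complex_Re_le_cmod[of w] by linarith
qed

lemma Ln_1_plus_Taylor_bound:
  assumes "norm x \<le> 1/2"
  shows "norm (Ln (1 + x) - (x - x^2/2 + x^3/3)) \<le> 16 * norm x ^ 4"
proof -
  have der: "(Ln_deriv i has_field_derivative Ln_deriv (Suc i) w) (at w within cball 1 (1/2))"
    if "w \<in> cball 1 (1/2)" for i w
  proof -
    have "w \<notin> \<real>\<^sub>\<le>\<^sub>0"
      using Re_ge_half_if_in_cball_1_half(1)[OF that] by (intro not_nonpos_Reals_if_Re_pos) simp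
    then show ?thesis by (rule has_field_derivative_at_within[OF has_field_derivative_Ln_deriv])
  qed
  have bound: "norm (Ln_deriv (Suc 3) w) \<le> 96" if "w \<in> cball 1 (1/2)" for w
  proof -
    have "inverse (norm w) \<le> 2"
      using le_imp_inverse_le[OF Re_ge_half_if_in_cball_1_half(2)[OF that]] by simp
    then have "inverse (norm w) ^ 4 \<le> 2 ^ 4" by (intro power_mono) auto
    then show ?thesis by (simp add: Ln_deriv_def norm_mult norm_power norm_inverse fact_numeral)
  qed
  have "norm (Ln_deriv 0 (1 + x) - (\<Sum>i\<le>3. Ln_deriv i 1 * (1 + x - 1) ^ i / fact i))
      \<le> 96 * norm (1 + x - 1) ^ Suc 3 / fact 3"
    by (rule complex_Taylor[OF convex_cball der bound]) (use assms in \<open>auto simp: dist_norm\<close>)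
  then show ?thesis
    by (simp add: Ln_deriv_def eval_nat_numeral fact_numeral)
qed


lemma inverse_1_plus_expansion_bound:
  fixes x e :: complex
  assumes x: "norm x \<le> 1/10" and e: "norm e \<le> 16 * norm x ^ 3"
  shows "norm (1 / (1 + (-x/2 + x^2/3 + e)) - (1 + x/2 - x^2/12)) \<le> 66 * norm x ^ 3"
proof -
  define n where "n = norm x"
  define v where "v = -x/2 + x^2/3 + e"
  define P where "P = 1 + x/2 - x^2/12"
  have n01: "0 \<le> n" "n \<le> 1/10" using x by (auto simp: n_def)
  have "n * n \<le> n * (1/10)" "n^3 * n \<le> n^3 * (1/10)"
    using mult_left_mono[OF n01(2)] n01(1) by simp_all
  moreover have "n * (n * n) \<le> n * (1/10 * (1/10))"
    using n01 by (intro mult_left_mono mult_mono) auto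
  ultimately have n: "0 \<le> n" "n^2 \<le> n/10" "n^3 \<le> n/100" "n^4 \<le> n^3/10"
    using n01 by (simp_all add: power2_eq_square power3_eq_cube power4_eq_xxxx mult_ac)
  have "norm v \<le> n/2 + n^2/3 + 16 * n^3"
    unfolding v_def using e
    by (intro order.trans[OF norm_triangle_ineq] add_mono)
       (auto simp: n_def norm_divide norm_power intro!: order.trans[OF norm_triangle_ineq4])
  then have "norm v \<le> 1/2" using n n01 by linarith
  then have v: "1/2 \<le> norm (1 + v)" using norm_triangle_ineq2[of 1 "-v"] by simp
  have "norm P \<le> 1 + n/2 + n^2/12" unfolding P_def n_def
    by (intro order.trans[OF norm_triangle_ineq4] add_mono order.trans[OF norm_triangle_ineq])
       (auto simp: norm_divide norm_power)
  then have "norm P \<le> 2" using n n01 by linarith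
  then have Pe: "norm (P * e) \<le> 2 * (16 * n^3)"
    unfolding norm_mult using e by (intro mult_mono) (auto simp: n_def)
  have x34: "norm (-5*x^3/24 + x^4/36) \<le> 5*n^3/24 + n^4/36"
    by (rule order.trans[OF norm_triangle_ineq]) (simp add: n_def norm_divide norm_power)
  have "1 - P * (1 + v) = -5*x^3/24 + x^4/36 - P * e"
    unfolding P_def v_def by (simp add: field_simps power2_eq_square power3_eq_cube power4_eq_xxxx)
  then have "norm (1 - P * (1 + v)) \<le> 5*n^3/24 + n^4/36 + 2 * (16 * n^3)"
    unfolding \<open>1 - P * (1 + v) = _\<close>
    using Pe x34 norm_triangle_ineq4[of "-5*x^3/24 + x^4/36" "P * e"] by linarith
  also have "\<dots> \<le> 33 * n^3" using n zero_le_power[of n 3] by linarith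
  finally have num: "norm (1 - P * (1 + v)) \<le> 33 * n^3" .
  have "1 + v \<noteq> 0" using v by auto
  then have "norm (1 / (1 + v) - P) = norm (1 - P * (1 + v)) / norm (1 + v)"
    by (simp add: field_simps norm_divide)
  also have "\<dots> \<le> (33 * n^3) / (1/2)"
    by (rule frac_le) (use num v n in auto)
  finally have "norm (1 / (1 + v) - P) \<le> 66 * n^3" by simp
  then show ?thesis by (simp add: v_def P_def n_def)
qed

lemma buff_factor_1_plus_Taylor_bound:
  assumes "norm x \<le> 1/10"
  shows "norm (buff_factor (1 + x) - (1 + x/2 - x^2/12)) \<le> 66 * norm x ^ 3"
proof (cases "x = 0")
  case True
  then show ?thesis by (simp add: buff_factor_def)
next
  case False
  define e where "e = (Ln (1 + x) - (x - x^2/2 + x^3/3)) / x"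
  have "norm (Ln (1 + x) - (x - x^2/2 + x^3/3)) \<le> 16 * norm x ^ 4"
    using assms by (intro Ln_1_plus_Taylor_bound) simp
  then have "norm e \<le> 16 * norm x ^ 3"
    using False by (simp add: e_def norm_divide divide_le_eq power4_eq_xxxx power3_eq_cube mult_ac)
  moreover have "buff_factor (1 + x) = 1 / (1 + (-x/2 + x^2/3 + e))"
    using False by (simp add: buff_factor_def e_def field_simps power2_eq_square power3_eq_cube)
  ultimately show ?thesis using inverse_1_plus_expansion_bound assms by simp
qed

section \<open>Bounds uniform along the segment\<close>

definition uniform_O :: "complex \<Rightarrow> nat \<Rightarrow> (complex \<Rightarrow> real \<Rightarrow> complex) \<Rightarrow> bool" where
  "uniform_O p n F \<longleftrightarrow> (\<exists>K. \<forall>\<^sub>F z in at p. \<forall>t\<in>{0..1}. norm (F z t) \<le> K * norm (z - p) ^ n)"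

lemma uniform_OI: "(\<forall>\<^sub>F z in at p. \<forall>t\<in>{0..1}. norm (F z t) \<le> K * norm (z - p) ^ n) \<Longrightarrow> uniform_O p n F"
  unfolding uniform_O_def by blast

lemma uniform_OE:
  assumes "uniform_O p n F"
  obtains K where "K \<ge> 0" "\<forall>\<^sub>F z in at p. \<forall>t\<in>{0..1}. norm (F z t) \<le> K * norm (z - p) ^ n"
proof -
  from assms obtain K where K: "\<forall>\<^sub>F z in at p. \<forall>t\<in>{0..1}. norm (F z t) \<le> K * norm (z - p) ^ n"
    by (auto simp: uniform_O_def)
  have "\<forall>\<^sub>F z in at p. \<forall>t\<in>{0..1}. norm (F z t) \<le> max K 0 * norm (z - p) ^ n"
    using K
  proof eventually_elim
    case (elim z)
    show ?case
    proof
      fix t :: real assume "t \<in> {0..1}"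
      then have "norm (F z t) \<le> K * norm (z - p) ^ n" using elim by auto
      also have "\<dots> \<le> max K 0 * norm (z - p) ^ n" by (rule mult_right_mono) auto
      finally show "norm (F z t) \<le> max K 0 * norm (z - p) ^ n" .
    qed
  qed
  then show ?thesis using that[of "max K 0"] by auto
qed

lemma uniform_O_add:
  assumes "uniform_O p n F" "uniform_O p n G" shows "uniform_O p n (\<lambda>z t. F z t + G z t)"
proof -
  obtain K1 where K1: "\<forall>\<^sub>F z in at p. \<forall>t\<in>{0..1}. norm (F z t) \<le> K1 * norm (z - p) ^ n"
    using assms(1) uniform_OE by blast
  obtain K2 where K2: "\<forall>\<^sub>F z in at p. \<forall>t\<in>{0..1}. norm (G z t) \<le> K2 * norm (z - p) ^ n"
    using assms(2) uniform_OE by blast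
  show ?thesis
  proof (rule uniform_OI[where K="K1 + K2"])
    show "\<forall>\<^sub>F z in at p. \<forall>t\<in>{0..1}. norm (F z t + G z t) \<le> (K1 + K2) * norm (z - p) ^ n"
      using K1 K2
    proof eventually_elim
      case (elim z)
      show ?case
      proof
        fix t :: real assume t: "t \<in> {0..1}"
        have "norm (F z t + G z t) \<le> norm (F z t) + norm (G z t)" by (rule norm_triangle_ineq)
        also have "\<dots> \<le> K1 * norm (z - p) ^ n + K2 * norm (z - p) ^ n"
          using elim t by (intro add_mono) auto
        finally show "norm (F z t + G z t) \<le> (K1 + K2) * norm (z - p) ^ n"
          by (simp add: distrib_right)
      qed
    qed
  qed
qed

lemma uniform_O_uminus: "uniform_O p n F \<Longrightarrow> uniform_O p n (\<lambda>z t. - F z t)"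
  by (simp add: uniform_O_def)

lemma uniform_O_diff:
  assumes "uniform_O p n F" "uniform_O p n G" shows "uniform_O p n (\<lambda>z t. F z t - G z t)"
  using uniform_O_add[OF assms(1) uniform_O_uminus[OF assms(2)]] by simp

lemma uniform_O_mult:
  assumes "uniform_O p n F" "uniform_O p m G" shows "uniform_O p (n + m) (\<lambda>z t. F z t * G z t)"
proof -
  obtain K1 where K1: "K1 \<ge> 0" "\<forall>\<^sub>F z in at p. \<forall>t\<in>{0..1}. norm (F z t) \<le> K1 * norm (z - p) ^ n"
    using assms(1) uniform_OE by blast
  obtain K2 where K2: "K2 \<ge> 0" "\<forall>\<^sub>F z in at p. \<forall>t\<in>{0..1}. norm (G z t) \<le> K2 * norm (z - p) ^ m"
    using assms(2) uniform_OE by blast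
  show ?thesis
  proof (rule uniform_OI[where K="K1 * K2"])
    show "\<forall>\<^sub>F z in at p. \<forall>t\<in>{0..1}. norm (F z t * G z t) \<le> (K1 * K2) * norm (z - p) ^ (n + m)"
      using K1(2) K2(2)
    proof eventually_elim
      case (elim z)
      show ?case
      proof
        fix t :: real assume t: "t \<in> {0..1}"
        have "norm (F z t * G z t) = norm (F z t) * norm (G z t)" by (rule norm_mult)
        also have "\<dots> \<le> (K1 * norm (z - p) ^ n) * (K2 * norm (z - p) ^ m)"
          using elim t K1(1) K2(1) by (intro mult_mono) auto
        finally show "norm (F z t * G z t) \<le> (K1 * K2) * norm (z - p) ^ (n + m)"
          by (simp add: power_add mult_ac)
      qed
    qed
  qed
qed

lemma uniform_O_mono:
  assumes "m \<le> n" "uniform_O p n F" shows "uniform_O p m F"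
proof -
  obtain K where K: "K \<ge> 0" "\<forall>\<^sub>F z in at p. \<forall>t\<in>{0..1}. norm (F z t) \<le> K * norm (z - p) ^ n"
    using assms(2) uniform_OE by blast
  have near: "\<forall>\<^sub>F z in at p. norm (z - p) \<le> 1"
    using eventually_at[of "\<lambda>z. norm (z - p) \<le> 1" p UNIV]
    by (auto intro!: exI[of _ 1] simp: dist_norm)
  show ?thesis
  proof (rule uniform_OI[where K=K])
    show "\<forall>\<^sub>F z in at p. \<forall>t\<in>{0..1}. norm (F z t) \<le> K * norm (z - p) ^ m"
      using K(2) near
    proof eventually_elim
      case (elim z)
      have "norm (z - p) ^ n \<le> norm (z - p) ^ m"
        by (rule power_decreasing) (use assms(1) elim in auto)
      then have "K * norm (z - p) ^ n \<le> K * norm (z - p) ^ m" using K(1) by (rule mult_left_mono)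
      then show ?case using elim by (auto intro: order.trans)
    qed
  qed
qed

lemma uniform_O_bound:
  assumes "\<forall>\<^sub>F z in at p. \<forall>t\<in>{0..1}. norm (F z t) \<le> C * norm (G z t)" "uniform_O p n G"
  shows "uniform_O p n F"
proof -
  obtain K where K: "K \<ge> 0" "\<forall>\<^sub>F z in at p. \<forall>t\<in>{0..1}. norm (G z t) \<le> K * norm (z - p) ^ n"
    using assms(2) uniform_OE by blast
  show ?thesis
  proof (rule uniform_OI[where K="max C 0 * K"])
    show "\<forall>\<^sub>F z in at p. \<forall>t\<in>{0..1}. norm (F z t) \<le> (max C 0 * K) * norm (z - p) ^ n"
      using K(2) assms(1)
    proof eventually_elim
      case (elim z)
      show ?case
      proof
        fix t :: real assume t: "t \<in> {0..1}"
        have "norm (F z t) \<le> C * norm (G z t)" using elim t by auto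
        also have "\<dots> \<le> max C 0 * norm (G z t)" by (rule mult_right_mono) auto
        finally have "norm (F z t) \<le> max C 0 * norm (G z t)" .
        also have "\<dots> \<le> max C 0 * (K * norm (z - p) ^ n)"
          using elim t by (intro mult_left_mono) auto
        finally show "norm (F z t) \<le> (max C 0 * K) * norm (z - p) ^ n" by (simp add: mult_ac)
      qed
    qed
  qed
qed

lemma uniform_O_cong:
  assumes "\<forall>\<^sub>F z in at p. \<forall>t\<in>{0..1}. F z t = G z t" "uniform_O p n G"
  shows "uniform_O p n F"
  by (rule uniform_O_bound[OF _ assms(2), where C=1]) (use assms(1) in \<open>eventually_elim, auto\<close>)

lemma uniform_O_divide:
  assumes "uniform_O p n F" "c > 0" "\<forall>\<^sub>F z in at p. \<forall>t\<in>{0..1}. norm (G z t) \<ge> c"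
  shows "uniform_O p n (\<lambda>z t. F z t / G z t)"
proof (rule uniform_O_bound[OF _ assms(1), where C="1/c"])
  show "\<forall>\<^sub>F z in at p. \<forall>t\<in>{0..1}. norm (F z t / G z t) \<le> 1 / c * norm (F z t)"
    using assms(3)
  proof eventually_elim
    case (elim z)
    show ?case
    proof
      fix t :: real assume t: "t \<in> {0..1}"
      have "c \<le> norm (G z t)" using elim t by auto
      then have "norm (F z t) / norm (G z t) \<le> norm (F z t) / c"
        using assms(2) by (intro divide_left_mono) (auto intro!: mult_pos_pos)
      then show "norm (F z t / G z t) \<le> 1 / c * norm (F z t)" by (simp add: norm_divide)
    qed
  qed
qed

lemma uniform_O_param_mult: "uniform_O p n F \<Longrightarrow> uniform_O p n (\<lambda>z t. of_real t * F z t)"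
  by (rule uniform_O_bound[where C=1]) (auto simp: norm_mult intro!: always_eventually mult_left_le_one_le)

lemma uniform_O_const: "uniform_O p 0 (\<lambda>z t. c)"
  by (rule uniform_OI[where K="norm c"]) simp

lemma uniform_O_power: "uniform_O p n (\<lambda>z t. (z - p) ^ n)"
  by (rule uniform_OI[where K=1]) (simp add: norm_power)

lemma uniform_O_isCont:
  assumes "isCont g p" shows "uniform_O p 0 (\<lambda>z t. g z)"
proof -
  have "\<forall>\<^sub>F z in at p. dist (g z) (g p) < 1"
    using assms unfolding isCont_def by (rule tendstoD) auto
  then have "\<forall>\<^sub>F z in at p. \<forall>t\<in>{0..1}. norm (g z) \<le> (norm (g p) + 1) * norm (z - p) ^ 0"
  proof eventually_elim
    case (elim z)
    then show ?case using norm_triangle_ineq2[of "g z" "g p"] by (auto simp: dist_norm)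
  qed
  then show ?thesis by (rule uniform_OI)
qed

lemma uniform_O_cmult: "uniform_O p n F \<Longrightarrow> uniform_O p n (\<lambda>z t. c * F z t)"
  using uniform_O_mult[OF uniform_O_const, of p n F c] by simp

lemma uniform_O_power_mult: "isCont g p \<Longrightarrow> uniform_O p n (\<lambda>z t. (z - p) ^ n * g z)"
  using uniform_O_mult[OF uniform_O_power uniform_O_isCont] by simp

lemma uniform_O_divide_const: "uniform_O p n F \<Longrightarrow> uniform_O p n (\<lambda>z t. F z t / c)"
  using uniform_O_cmult[of p n F "inverse c"] by (simp add: divide_inverse mult.commute)

lemma uniform_O_Suc_imp_tendsto_divide:
  assumes "uniform_O p (Suc n) (\<lambda>z t. g z)"
  shows "((\<lambda>z. g z / (z - p) ^ n) \<longlongrightarrow> 0) (at p)"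
proof -
  obtain K where "\<forall>\<^sub>F z in at p. \<forall>t\<in>{0..1::real}. norm (g z) \<le> K * norm (z - p) ^ Suc n"
    using uniform_OE[OF assms] by blast
  then have ev: "\<forall>\<^sub>F z in at p. norm (g z / (z - p) ^ n) \<le> K * norm (z - p)"
    using eventually_neq_at_within[of p p UNIV]
  proof eventually_elim
    case (elim z)
    have "norm (g z / (z - p) ^ n) = norm (g z) / norm (z - p) ^ n"
      by (simp add: norm_divide norm_power)
    also have "\<dots> \<le> K * norm (z - p) ^ Suc n / norm (z - p) ^ n"
      using bspec[OF elim(1), of 0] by (intro divide_right_mono) auto
    also have "\<dots> = K * norm (z - p)"
      using elim(2) by simp
    finally show ?case .
  qed
  have "((\<lambda>z. K * norm (z - p)) \<longlongrightarrow> K * norm (p - p)) (at p)"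
    by (intro tendsto_intros)
  then show ?thesis using Lim_null_comparison[OF ev] by simp
qed

section \<open>Isolated fixed points\<close>

locale buff_isolated_fixed_point =
  fixes f :: "complex \<Rightarrow> complex" and U :: "complex set" and p :: complex
  assumes open_U: "open U" and holomorphic_f: "f holomorphic_on U"
    and Re_deriv_pos: "\<And>z. z \<in> U \<Longrightarrow> 0 < Re (deriv f z)"
    and p_in_U: "p \<in> U" and fixed_p: "f p = p"
    and isolated: "\<forall>\<^sub>F z in at p. f z \<noteq> z"
begin

definition "h z = f z - z"
definition "seg z t = z + of_real t * h z"
definition "ratio z t = h (seg z t) / h z"
definition "integrand z t = buff_form f (seg z t) * h z"
definition "u z = -1 + integral {0..1} (integrand z)"
definition "multiplier = deriv f p"
definition "ratio_limit t = 1 + of_real t * (multiplier - 1)"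
definition "kappa = min 1 (Re multiplier)"
definition "nonfixed = {s \<in> U. f s \<noteq> s}"

lemma buff_u_eq: "buff_u f z = u z"
proof -
  have "linepath z (f z) t = seg z t" for t
    by (simp add: linepath_def seg_def h_def scaleR_conv_of_real algebra_simps)
  then show ?thesis
    by (simp add: buff_u_def u_def contour_integral_integral integrand_def[abs_def] h_def)
qed

lemma integrand_eq: "integrand z t = buff_factor (deriv f (seg z t)) / ratio z t"
  by (simp add: integrand_def buff_form_def ratio_def h_def)

lemma seg_minus: "seg z t - z = of_real t * h z"
  by (simp add: seg_def)

lemma has_field_derivative_f: "z \<in> U \<Longrightarrow> (f has_field_derivative deriv f z) (at z within T)"
  using holomorphic_derivI[OF holomorphic_f open_U] by blast

lemma holomorphic_deriv_f: "deriv f holomorphic_on U"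
  using holomorphic_deriv[OF holomorphic_f open_U] .

lemma isCont_deriv_f: "z \<in> U \<Longrightarrow> isCont (deriv f) z"
  using holomorphic_on_imp_continuous_on[OF holomorphic_deriv_f] open_U
  by (simp add: continuous_on_eq_continuous_at)

lemma has_field_derivative_h: "z \<in> U \<Longrightarrow> (h has_field_derivative (deriv f z - 1)) (at z within T)"
  unfolding h_def[abs_def] by (auto intro!: derivative_eq_intros has_field_derivative_f)

lemma uniform_limit_seg: "uniform_limit {0..1} seg (\<lambda>_. p) (at p)"
proof (rule uniform_limitI)
  fix e :: real assume "0 < e"
  have "(h \<longlongrightarrow> h p) (at p)"
    using has_field_derivative_h[OF p_in_U, of UNIV] DERIV_isCont isCont_def by blast
  then have "\<forall>\<^sub>F z in at p. norm (h z) < e/2"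
    using tendstoD[of h 0 "at p" "e/2"] \<open>0 < e\<close> by (simp add: h_def fixed_p dist_norm)
  moreover have "\<forall>\<^sub>F z in at p. norm (z - p) < e/2"
    using \<open>0 < e\<close> by (auto simp: eventually_at dist_norm intro!: exI[of _ "e/2"])
  ultimately show "\<forall>\<^sub>F z in at p. \<forall>t\<in>{0..1}. dist (seg z t) p < e"
  proof eventually_elim
    case (elim z)
    show ?case
    proof
      fix t :: real assume "t \<in> {0..1}"
      have "norm (seg z t - p) \<le> norm (z - p) + norm (of_real t * h z)"
        using norm_triangle_ineq[of "z - p" "of_real t * h z"] by (simp add: seg_def algebra_simps)
      also have "\<dots> < e"
        using elim norm_of_real_mult_le[OF \<open>t \<in> {0..1}\<close>, of "h z"] by linarith
      finally show "dist (seg z t) p < e" by (simp add: dist_norm)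
    qed
  qed
qed

lemma eventually_seg_in_ball:
  assumes "0 < d"
  shows "\<forall>\<^sub>F z in at p. z \<in> ball p d \<and> (\<forall>t\<in>{0..1}. seg z t \<in> ball p d)"
  using uniform_limitD[OF uniform_limit_seg assms]
  by eventually_elim (force simp: dist_commute seg_def)

lemma uniform_limit_ratio: "uniform_limit {0..1} ratio ratio_limit (at p)"
proof (rule uniform_limitI)
  fix e :: real assume "0 < e"
  obtain d0 where d0: "0 < d0" "ball p d0 \<subseteq> U"
    using open_U p_in_U open_contains_ball by blast
  obtain d1 where d1: "0 < d1" "\<And>s. dist s p < d1 \<Longrightarrow> dist (deriv f s) multiplier < e/2"
    using isCont_deriv_f[OF p_in_U] \<open>0 < e\<close> unfolding continuous_at_eps_delta multiplier_def
    by (meson half_gt_zero)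
  define d where "d = min d0 d1"
  have d: "0 < d" "ball p d \<subseteq> U" "\<And>s. s \<in> ball p d \<Longrightarrow> norm (deriv f s - multiplier) \<le> e/2"
    using d0 d1 by (auto simp: d_def dist_norm norm_minus_commute intro: less_imp_le)
  show "\<forall>\<^sub>F z in at p. \<forall>t\<in>{0..1}. dist (ratio z t) (ratio_limit t) < e"
    using eventually_seg_in_ball[OF d(1)] isolated
  proof eventually_elim
    case (elim z)
    show ?case
    proof
      fix t :: real assume t: "t \<in> {0..1}"
      have "h z \<noteq> 0" using elim by (simp add: h_def)
      \<comment> \<open>\<open>h (seg z t) - h z - t (\<lambda> - 1) h z = H (seg z t) - H z\<close>, and \<open>H' = f' - \<lambda>\<close> is small near \<open>p\<close>.\<close>
      define H where "H s = f s - multiplier * s" for s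
      have "(H has_field_derivative (deriv f s - multiplier)) (at s within ball p d)"
        if "s \<in> ball p d" for s
        unfolding H_def[abs_def] using that d(2)
        by (auto intro!: derivative_eq_intros has_field_derivative_f)
      then have "norm (H (seg z t) - H z) \<le> e/2 * norm (seg z t - z)"
        by (rule field_differentiable_bound[OF convex_ball _ d(3)]) (use elim t in auto)
      also have "\<dots> \<le> e/2 * norm (h z)"
        using \<open>0 < e\<close> norm_of_real_mult_le[OF t] by (simp add: seg_minus)
      finally have bound: "norm (H (seg z t) - H z) \<le> e/2 * norm (h z)" .
      have "ratio z t - ratio_limit t = (H (seg z t) - H z) / h z"
        using \<open>h z \<noteq> 0\<close> by (simp add: ratio_def ratio_limit_def H_def h_def seg_def field_simps)
      then have "norm (ratio z t - ratio_limit t) \<le> e/2"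
        using bound \<open>h z \<noteq> 0\<close> by (simp add: norm_divide divide_le_eq)
      then show "dist (ratio z t) (ratio_limit t) < e"
        using \<open>0 < e\<close> by (simp add: dist_norm)
    qed
  qed
qed

lemma kappa_pos: "0 < kappa"
  using Re_deriv_pos[OF p_in_U] by (simp add: kappa_def multiplier_def)

lemma norm_ratio_limit_ge: "t \<in> {0..1} \<Longrightarrow> kappa \<le> norm (ratio_limit t)"
  using Re_segment_from_1_ge[of t multiplier] complex_Re_le_cmod[of "ratio_limit t"]
  by (simp add: kappa_def ratio_limit_def)

lemma eventually_norm_ratio_ge: "\<forall>\<^sub>F z in at p. \<forall>t\<in>{0..1}. kappa/2 \<le> norm (ratio z t)"
  using uniform_limitD[OF uniform_limit_ratio half_gt_zero[OF kappa_pos]]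
proof eventually_elim
  case (elim z)
  show ?case
  proof
    fix t :: real assume "t \<in> {0..1}"
    then have "norm (ratio_limit t - ratio z t) < kappa/2" "kappa \<le> norm (ratio_limit t)"
      using elim norm_ratio_limit_ge by (auto simp: dist_norm norm_minus_commute)
    then show "kappa/2 \<le> norm (ratio z t)"
      using norm_triangle_ineq2[of "ratio_limit t" "ratio z t"] by linarith
  qed
qed

definition "admissible z \<longleftrightarrow> (\<forall>t\<in>{0..1}. seg z t \<in> U \<and> kappa/2 \<le> norm (ratio z t))"

lemma eventually_admissible: "\<forall>\<^sub>F z in at p. admissible z"
proof -
  obtain d where d: "0 < d" "ball p d \<subseteq> U"
    using open_U p_in_U open_contains_ball by blast
  show ?thesis
    using eventually_seg_in_ball[OF d(1)] eventually_norm_ratio_ge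
    by eventually_elim (use d(2) in \<open>auto simp: admissible_def\<close>)
qed

lemma admissible_in_U: "admissible z \<Longrightarrow> z \<in> U"
  by (auto simp: admissible_def seg_def dest: bspec[of _ _ 0])

lemma admissible_seg_nonfixed:
  assumes "admissible z" "t \<in> {0..1}"
  shows "seg z t \<in> nonfixed"
proof -
  have "kappa/2 \<le> norm (ratio z t)" using assms by (simp add: admissible_def)
  then have "ratio z t \<noteq> 0" using kappa_pos by auto
  then show ?thesis using assms by (auto simp: ratio_def admissible_def nonfixed_def h_def)
qed

lemma open_nonfixed: "open nonfixed"
proof -
  have "continuous_on U (\<lambda>s. f s - s)"
    using holomorphic_on_imp_continuous_on[OF holomorphic_f] by (intro continuous_intros)
  from continuous_open_preimage[OF this open_U open_Compl[OF closed_singleton[of 0]]]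
  show ?thesis by (simp add: nonfixed_def vimage_def Int_def)
qed

lemma holomorphic_buff_form: "buff_form f holomorphic_on nonfixed"
proof -
  have "(buff_factor \<circ> deriv f) holomorphic_on nonfixed"
    by (rule holomorphic_on_compose_gen[OF _ holomorphic_on_buff_factor])
       (use holomorphic_on_subset[OF holomorphic_deriv_f] Re_deriv_pos in \<open>auto simp: nonfixed_def\<close>)
  then have "(\<lambda>s. buff_factor (deriv f s) / (f s - s)) holomorphic_on nonfixed"
    using holomorphic_on_subset[OF holomorphic_f, of nonfixed]
    by (intro holomorphic_intros) (auto simp: nonfixed_def o_def)
  then show ?thesis by (simp add: buff_form_def[abs_def])
qed

lemma continuous_on_integrand:
  assumes "admissible z" shows "continuous_on {0..1} (integrand z)"
proof -
  have "continuous_on {0..1} (seg z)" unfolding seg_def by (intro continuous_intros)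
  then have "continuous_on {0..1} (\<lambda>t. buff_form f (seg z t))"
    by (rule continuous_on_compose2[OF holomorphic_on_imp_continuous_on[OF holomorphic_buff_form]])
       (use admissible_seg_nonfixed[OF assms] in auto)
  then show ?thesis unfolding integrand_def[abs_def] by (intro continuous_intros)
qed

lemma uniform_limit_integrand:
  "uniform_limit {0..1} integrand (\<lambda>t. buff_factor multiplier / ratio_limit t) (at p)"
proof -
  have "isCont buff_factor multiplier"
    using holomorphic_on_imp_continuous_on[OF holomorphic_on_buff_factor] open_halfspace_Re_gt[of 0]
      Re_deriv_pos[OF p_in_U]
    by (simp add: continuous_on_eq_continuous_at multiplier_def)
  then have "isCont (\<lambda>s. buff_factor (deriv f s)) p"
    using continuous_at_compose[OF isCont_deriv_f[OF p_in_U]] by (simp add: multiplier_def o_def)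
  from uniform_limit_isCont_compose[OF uniform_limit_seg this]
  have "uniform_limit {0..1} (\<lambda>z t. buff_factor (deriv f (seg z t))) (\<lambda>_. buff_factor multiplier) (at p)"
    by (simp add: multiplier_def)
  from uniform_lim_divide[OF this uniform_limit_ratio _ norm_ratio_limit_ge kappa_pos]
  show ?thesis by (simp add: integrand_eq[abs_def] image_constant_conv)
qed

lemma tendsto_u: "(u \<longlongrightarrow> 0) (at p)"
proof (rule tendstoI)
  fix e :: real assume "0 < e"
  let ?I0 = "\<lambda>t. buff_factor multiplier / ratio_limit t"
  have I0: "(?I0 has_integral 1) {0..1}"
    using buff_factor_div_segment_has_integral[of multiplier] Re_deriv_pos[OF p_in_U]
    by (simp add: multiplier_def ratio_limit_def)
  show "\<forall>\<^sub>F z in at p. dist (u z) 0 < e"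
    using uniform_limitD[OF uniform_limit_integrand half_gt_zero[OF \<open>0 < e\<close>]]
      eventually_admissible
  proof eventually_elim
    case (elim z)
    have "integrand z integrable_on {0..1}"
      using continuous_on_integrand[OF elim(2)] by (rule integrable_continuous_interval)
    then have "((\<lambda>t. integrand z t - ?I0 t) has_integral u z) {0..1}"
      using has_integral_diff[OF integrable_integral I0] by (simp add: u_def)
    moreover have "norm (integrand z t - ?I0 t) \<le> e/2" if "t \<in> {0..1}" for t
      using elim(1) that by (auto simp: dist_norm less_imp_le)
    ultimately have "norm (u z) \<le> e/2 * Henstock_Kurzweil_Integration.content (cbox (0::real) 1)"
      by (intro has_integral_bound[of "e/2"]) (use \<open>0 < e\<close> in auto)
    then show ?case using \<open>0 < e\<close> by simp
  qed
qed

lemma has_field_derivative_integrand: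
  assumes "admissible x" "t \<in> {0..1}"
  shows "((\<lambda>x. integrand x t) has_field_derivative
           deriv (buff_form f) (seg x t) * (1 + of_real t * (deriv f x - 1)) * h x
           + (deriv f x - 1) * buff_form f (seg x t)) (at x)"
proof -
  have x: "x \<in> U" "seg x t \<in> nonfixed"
    using admissible_in_U admissible_seg_nonfixed assms by auto
  have seg: "((\<lambda>x. seg x t) has_field_derivative (1 + of_real t * (deriv f x - 1))) (at x)"
    unfolding seg_def[abs_def] using has_field_derivative_h[OF x(1), of UNIV]
    by (auto intro!: derivative_eq_intros)
  have "(buff_form f has_field_derivative deriv (buff_form f) (seg x t)) (at (seg x t))"
    by (rule holomorphic_derivI[OF holomorphic_buff_form open_nonfixed x(2)])
  from DERIV_mult[OF DERIV_chain2[OF this seg] has_field_derivative_h[OF x(1), of UNIV]]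
  show ?thesis unfolding integrand_def by simp
qed

lemma u_field_differentiable:
  assumes "open S" "S \<subseteq> Collect admissible" "z0 \<in> S"
  shows "u field_differentiable at z0"
proof -
  obtain e where e: "0 < e" "ball z0 e \<subseteq> S" using assms(1,3) open_contains_ball by blast
  then have adm: "admissible x" if "x \<in> ball z0 e" for x using that assms(2) by blast
  define D where "D x t = deriv (buff_form f) (seg x t) * (1 + of_real t * (deriv f x - 1)) * h x
      + (deriv f x - 1) * buff_form f (seg x t)" for x t
  define T where "T = ball z0 e \<times> cbox (0::real) 1"
  have "fst ` T \<subseteq> U" using admissible_in_U[OF adm] by (auto simp: T_def)
  then have fst: "continuous_on T (\<lambda>y. g (fst y))" if "continuous_on U g" for g
    by (rule continuous_on_compose2[OF that continuous_on_fst[OF continuous_on_id]])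
  have seg: "continuous_on T (\<lambda>y. seg (fst y) (snd y))"
    unfolding seg_def h_def using fst[OF holomorphic_on_imp_continuous_on[OF holomorphic_f]]
    by (intro continuous_intros)
  have seg_T: "(\<lambda>y. seg (fst y) (snd y)) ` T \<subseteq> nonfixed"
    using admissible_seg_nonfixed[OF adm] by (auto simp: T_def)
  have "continuous_on T (\<lambda>(x, t). D x t)"
    unfolding case_prod_unfold D_def h_def
    using fst[OF holomorphic_on_imp_continuous_on[OF holomorphic_f]]
      fst[OF holomorphic_on_imp_continuous_on[OF holomorphic_deriv_f]]
      continuous_on_compose2[OF holomorphic_on_imp_continuous_on[OF holomorphic_buff_form] seg seg_T]
      continuous_on_compose2[OF holomorphic_on_imp_continuous_on[OF
        holomorphic_deriv[OF holomorphic_buff_form open_nonfixed]] seg seg_T]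
    by (intro continuous_intros)
  moreover have "((\<lambda>x. integrand x t) has_field_derivative D x t) (at x within ball z0 e)"
    if "x \<in> ball z0 e" "t \<in> cbox 0 1" for x t
    using has_field_derivative_integrand[OF adm] that
    by (auto simp: D_def intro: has_field_derivative_at_within)
  moreover have "integrand x integrable_on cbox 0 1" if "x \<in> ball z0 e" for x
    using integrable_continuous_interval[OF continuous_on_integrand[OF adm[OF that]]] by simp
  ultimately have "((\<lambda>x. integral (cbox 0 1) (integrand x)) has_field_derivative
      integral (cbox 0 1) (D z0)) (at z0 within ball z0 e)"
    by (intro leibniz_rule_field_derivative) (use e in \<open>auto simp: T_def\<close>)
  then have "((\<lambda>x. integral {0..1} (integrand x)) has_field_derivative
      integral (cbox 0 1) (D z0)) (at z0)"
    using at_within_open[of z0 "ball z0 e"] e by simp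
  then show ?thesis
    unfolding u_def[abs_def] field_differentiable_def by (auto intro!: derivative_eq_intros)
qed

definition "u_ext z = (if z = p then 0 else u z)"

lemma holomorphic_u_ext:
  obtains r where "0 < r" "u_ext holomorphic_on ball p r"
proof -
  obtain r where "0 < r" and adm: "\<And>z. z \<in> ball p r - {p} \<Longrightarrow> admissible z"
    using eventually_admissible unfolding eventually_at by (auto simp: dist_commute)
  have "u holomorphic_on ball p r - {p}"
    unfolding holomorphic_on_def
  proof
    fix z assume z: "z \<in> ball p r - {p}"
    have "u field_differentiable at z"
      by (rule u_field_differentiable[of "ball p r - {p}"]) (use adm z in auto)
    then show "u field_differentiable at z within ball p r - {p}"
      by (rule field_differentiable_at_within)
  qed
  then have "u_ext holomorphic_on ball p r - {p}"
    by (rule holomorphic_transform) (auto simp: u_ext_def)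
  moreover have "(u_ext \<longlongrightarrow> 0) (at p)"
    using tendsto_u by (rule Lim_transform_eventually) (auto simp: u_ext_def eventually_at_filter)
  then have "(u_ext \<longlongrightarrow> u_ext p) (at p)" by (simp add: u_ext_def)
  ultimately show ?thesis
    using that \<open>0 < r\<close> holomorphic_on_ball_if_tendsto by blast
qed

end

section \<open>Fixed points of higher multiplicity\<close>

text \<open>With \<open>x = h'(seg z t)\<close>, \<open>h1 = h' z\<close>, \<open>hh = h z * h'' z\<close> and \<open>r = ratio z t\<close>, every
  summand on the right is \<open>O(\<bar>z - p\<bar>^(2q+1))\<close>.\<close>
lemma buff_expansion_identity:
  fixes a x r h1 hh t E2 :: complex
  assumes "E2 = t * hh/2 - h1^2/12 - t * h1^2/2 + t^2 * h1^2 - t^2 * hh/2"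
  shows "a - (1 + ((1/2 - t) * h1 + E2)) * r =
     (a - (1 + x/2 - x^2/12)) + (x - h1 - t * hh)/2 - (x - h1) * (x + h1)/12
     - E2 * (t * h1) - ((1/2 - t) * h1 + E2) * (t * t * hh)/2
     - (1 + ((1/2 - t) * h1 + E2)) * (r - (1 + t * h1 + t^2 * hh/2))"
  unfolding assms by (simp add: field_simps power2_eq_square)

locale buff_parabolic_fixed_point = buff_isolated_fixed_point +
  fixes q :: nat and e :: "complex \<Rightarrow> complex" and r :: real
  assumes q_pos: "0 < q" and r_pos: "0 < r" and ball_subset_U: "ball p r \<subseteq> U"
    and holomorphic_e: "e holomorphic_on ball p r" and e_p: "e p \<noteq> 0"
    and h_factor: "\<And>w. w \<in> ball p r \<Longrightarrow> f w - w = (w - p) ^ (q + 1) * e w"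
begin

definition "h' = deriv h"
definition "h'' = deriv h'"
definition "e' = deriv e"
definition "e'' = deriv e'"

lemma holomorphic_h: "h holomorphic_on U"
  unfolding h_def[abs_def] by (intro holomorphic_intros holomorphic_f)

lemma holomorphic_h': "h' holomorphic_on U"
  unfolding h'_def by (rule holomorphic_deriv[OF holomorphic_h open_U])

lemma h'_eq_deriv_f: "s \<in> U \<Longrightarrow> h' s = deriv f s - 1"
  unfolding h'_def by (rule DERIV_imp_deriv[OF has_field_derivative_h])

lemma holomorphic_e': "e' holomorphic_on ball p r"
  unfolding e'_def by (rule holomorphic_deriv[OF holomorphic_e open_ball])

lemma holomorphic_e'': "e'' holomorphic_on ball p r"
  unfolding e''_def by (rule holomorphic_deriv[OF holomorphic_e' open_ball])

lemma has_field_derivative_e: "w \<in> ball p r \<Longrightarrow> (e has_field_derivative e' w) (at w)"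
  unfolding e'_def by (rule holomorphic_derivI[OF holomorphic_e open_ball])

lemma has_field_derivative_e': "w \<in> ball p r \<Longrightarrow> (e' has_field_derivative e'' w) (at w)"
  unfolding e''_def by (rule holomorphic_derivI[OF holomorphic_e' open_ball])

lemma h_eq: "w \<in> ball p r \<Longrightarrow> h w = (w - p) ^ (q + 1) * e w"
  using h_factor by (simp add: h_def)

lemma h'_eq:
  assumes "w \<in> ball p r"
  shows "h' w = (w - p) ^ q * (of_nat (q + 1) * e w + (w - p) * e' w)"
proof -
  have "h' w = deriv (\<lambda>w. (w - p) ^ Suc q * e w) w"
    unfolding h'_def
    by (rule deriv_cong_ev[OF eventually_mono[OF eventually_nhds_in_open[OF open_ball assms]]])
       (auto simp: h_eq)
  also have "\<dots> = of_nat (Suc q) * (w - p) ^ q * e w + e' w * (w - p) ^ Suc q"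
    by (rule DERIV_imp_deriv[OF DERIV_mult[OF has_field_derivative_power_Suc_minus
          has_field_derivative_e[OF assms]]])
  also have "\<dots> = (w - p) ^ q * (of_nat (q + 1) * e w + (w - p) * e' w)"
    by (simp add: algebra_simps)
  finally show ?thesis .
qed

lemma h''_eq:
  assumes "w \<in> ball p r"
  shows "h'' w = (w - p) ^ (q - 1) *
    (of_nat (q + 1) * of_nat q * e w + 2 * of_nat (q + 1) * (w - p) * e' w + (w - p)^2 * e'' w)"
proof -
  obtain k where k: "q = Suc k" using q_pos by (cases q) auto
  define G where "G w = of_nat (q + 1) * e w + (w - p) * e' w" for w
  have G: "(G has_field_derivative of_nat (q + 1) * e' w + (e' w + (w - p) * e'' w)) (at w)"
    unfolding G_def using assms
    by (auto intro!: derivative_eq_intros has_field_derivative_e has_field_derivative_e')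
  have "h'' w = deriv (\<lambda>w. (w - p) ^ Suc k * G w) w"
    unfolding h''_def
    by (rule deriv_cong_ev[OF eventually_mono[OF eventually_nhds_in_open[OF open_ball assms]]])
       (auto simp: h'_eq G_def k)
  also have "\<dots> = of_nat (Suc k) * (w - p) ^ k * G w
      + (of_nat (q + 1) * e' w + (e' w + (w - p) * e'' w)) * (w - p) ^ Suc k"
    by (rule DERIV_imp_deriv[OF DERIV_mult[OF has_field_derivative_power_Suc_minus G]])
  also have "\<dots> = (w - p) ^ k *
    (of_nat (q + 1) * of_nat q * e w + 2 * of_nat (q + 1) * (w - p) * e' w + (w - p)^2 * e'' w)"
    unfolding G_def k by (simp add: algebra_simps power2_eq_square)
  finally show ?thesis by (simp add: k)
qed

lemma h'_p: "h' p = 0"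
  using h'_eq[of p] r_pos q_pos by simp

lemma eventually_in_ball: "\<forall>\<^sub>F z in at p. z \<in> ball p r"
  using r_pos by (auto simp: eventually_at dist_commute intro!: exI[of _ r])

lemma isCont_at_p: "g holomorphic_on ball p r \<Longrightarrow> isCont g p"
  using holomorphic_on_imp_continuous_on[of g "ball p r"] r_pos
  by (simp add: continuous_on_eq_continuous_at)

lemma uniform_O_factor:
  assumes "\<And>w. w \<in> ball p r \<Longrightarrow> g w = (w - p) ^ n * G w" and "G holomorphic_on ball p r"
  shows "uniform_O p n (\<lambda>z t. g z)"
proof (rule uniform_O_cong[OF _ uniform_O_power_mult])
  show "isCont G p" using assms(2) by (rule isCont_at_p)
  show "\<forall>\<^sub>F z in at p. \<forall>t\<in>{0..1}. g z = (z - p) ^ n * G z"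
    using eventually_in_ball by eventually_elim (simp add: assms(1))
qed

lemma uniform_O_h: "uniform_O p (q + 1) (\<lambda>z t. h z)"
  by (rule uniform_O_factor[OF h_eq holomorphic_e])

lemma uniform_O_h': "uniform_O p q (\<lambda>z t. h' z)"
  by (rule uniform_O_factor[of h']) (auto simp: h'_eq intro!: holomorphic_intros holomorphic_e holomorphic_e')

lemma uniform_O_h'': "uniform_O p (q - 1) (\<lambda>z t. h'' z)"
  by (rule uniform_O_factor[of h'']) (auto simp: h''_eq
      intro!: holomorphic_intros holomorphic_e holomorphic_e' holomorphic_e'')

lemma uniform_O_h_h'': "uniform_O p (2 * q) (\<lambda>z t. h z * h'' z)"
  by (rule uniform_O_mono[OF _ uniform_O_mult[OF uniform_O_h uniform_O_h'']]) simp

lemma uniform_O_h_h: "uniform_O p (2 * q + 2) (\<lambda>z t. h z * h z)"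
  using uniform_O_mult[OF uniform_O_h uniform_O_h] by (simp add: mult_2)

lemma tendsto_h_h''_div:
  "((\<lambda>z. h z * h'' z / (z - p) ^ (2 * q)) \<longlongrightarrow> of_nat (q + 1) * of_nat q * e p ^ 2) (at p)"
proof -
  define Q where "Q z = e z * (of_nat (q + 1) * of_nat q * e z + 2 * of_nat (q + 1) * (z - p) * e' z
      + (z - p)^2 * e'' z)" for z
  have "isCont Q p"
    unfolding Q_def using holomorphic_e holomorphic_e' holomorphic_e''
    by (intro continuous_intros isCont_at_p)
  moreover have "Q p = of_nat (q + 1) * of_nat q * e p ^ 2"
    by (simp add: Q_def power2_eq_square)
  ultimately have "(Q \<longlongrightarrow> of_nat (q + 1) * of_nat q * e p ^ 2) (at p)"
    by (simp add: isCont_def)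
  moreover have "\<forall>\<^sub>F z in at p. Q z = h z * h'' z / (z - p) ^ (2 * q)"
    using eventually_in_ball eventually_neq_at_within[of p p UNIV]
  proof eventually_elim
    case (elim z)
    have "h z * h'' z = ((z - p) ^ (q + 1) * (z - p) ^ (q - 1)) * Q z"
      unfolding h_eq[OF elim(1)] h''_eq[OF elim(1)] Q_def by (simp only: mult_ac)
    also have "(z - p) ^ (q + 1) * (z - p) ^ (q - 1) = (z - p) ^ (2 * q)"
      using q_pos by (simp only: power_add [symmetric]) (simp add: mult_2)
    finally have "h z * h'' z = (z - p) ^ (2 * q) * Q z" .
    then show ?case using elim(2) by simp
  qed
  ultimately show ?thesis by (rule Lim_transform_eventually)
qed

lemma isCont_h': "isCont h' p"
  using holomorphic_on_imp_continuous_on[OF holomorphic_h'] open_U p_in_U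
  by (simp add: continuous_on_eq_continuous_at)

lemma third_deriv_bound:
  obtains \<rho> M where "0 < \<rho>" "cball p \<rho> \<subseteq> U" "0 \<le> M"
    "\<And>x. x \<in> cball p \<rho> \<Longrightarrow> norm ((deriv ^^ 3) h x) \<le> M"
proof -
  have "continuous_on U ((deriv ^^ 3) h)"
    by (intro holomorphic_on_imp_continuous_on holomorphic_higher_deriv holomorphic_h open_U)
  from continuous_on_bounded_near[OF this open_U p_in_U]
  obtain \<rho> M where \<rho>: "0 < \<rho>" "cball p \<rho> \<subseteq> U"
    and M: "\<And>x. x \<in> cball p \<rho> \<Longrightarrow> norm ((deriv ^^ 3) h x) \<le> M" by blast
  moreover have "0 \<le> M" using M[of p] \<rho>(1) norm_ge_zero by (meson centre_in_cball less_imp_le order_trans)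
  ultimately show ?thesis using that by blast
qed

lemma h'_seg_expansion:
  "uniform_O p (2 * q + 2) (\<lambda>z t. h' (seg z t) - h' z - of_real t * (h z * h'' z))"
proof -
  obtain \<rho> M where \<rho>: "0 < \<rho>" "cball p \<rho> \<subseteq> U" "0 \<le> M"
    "\<And>x. x \<in> cball p \<rho> \<Longrightarrow> norm ((deriv ^^ 3) h x) \<le> M"
    using third_deriv_bound by blast
  have "\<forall>\<^sub>F z in at p. \<forall>t\<in>{0..1}.
      norm (h' (seg z t) - h' z - of_real t * (h z * h'' z)) \<le> M * norm (h z * h z)"
    using eventually_seg_in_ball[OF \<rho>(1)]
  proof eventually_elim
    case (elim z)
    show ?case
    proof
      fix t :: real assume t: "t \<in> {0..1}"
      have "norm (h' (seg z t) - (\<Sum>i\<le>1. (deriv ^^ i) h' z * (seg z t - z) ^ i / fact i))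
          \<le> M * norm (seg z t - z) ^ Suc 1 / fact 1"
        by (rule holomorphic_Taylor_bound[OF holomorphic_h' open_U convex_cball \<rho>(2)])
           (use \<rho>(4) elim t in \<open>auto simp: h'_def eval_nat_numeral intro: less_imp_le\<close>)
      moreover have "(\<Sum>i\<le>1. (deriv ^^ i) h' z * (seg z t - z) ^ i / fact i)
          = h' z + of_real t * (h z * h'' z)"
        by (simp add: h''_def seg_minus mult_ac)
      moreover have "M * norm (seg z t - z) ^ 2 \<le> M * norm (h z * h z)"
        using power_mono[OF norm_of_real_mult_le[OF t, of "h z"], of 2] \<rho>(3)
        by (intro mult_left_mono) (simp_all add: seg_minus norm_mult power2_eq_square)
      ultimately show "norm (h' (seg z t) - h' z - of_real t * (h z * h'' z)) \<le> M * norm (h z * h z)"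
        by (simp add: diff_diff_eq power2_eq_square)
    qed
  qed
  then show ?thesis by (rule uniform_O_bound[OF _ uniform_O_h_h])
qed

lemma ratio_expansion:
  "uniform_O p (2 * q + 2)
     (\<lambda>z t. ratio z t - (1 + of_real t * h' z + (of_real t)^2 * (h z * h'' z) / 2))"
proof -
  obtain \<rho> M where \<rho>: "0 < \<rho>" "cball p \<rho> \<subseteq> U" "0 \<le> M"
    "\<And>x. x \<in> cball p \<rho> \<Longrightarrow> norm ((deriv ^^ 3) h x) \<le> M"
    using third_deriv_bound by blast
  have "\<forall>\<^sub>F z in at p. \<forall>t\<in>{0..1}.
      norm (ratio z t - (1 + of_real t * h' z + (of_real t)^2 * (h z * h'' z) / 2))
        \<le> M/2 * norm (h z * h z)"
    using eventually_seg_in_ball[OF \<rho>(1)] isolated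
  proof eventually_elim
    case (elim z)
    show ?case
    proof
      fix t :: real assume t: "t \<in> {0..1}"
      have "h z \<noteq> 0" using elim(2) by (simp add: h_def)
      define D where "D = h (seg z t) - (h z + h' z * (seg z t - z) + h'' z * (seg z t - z)^2 / 2)"
      have "norm D \<le> M * norm (seg z t - z) ^ Suc 2 / fact 2"
        unfolding D_def
        using holomorphic_Taylor_bound[OF holomorphic_h open_U convex_cball \<rho>(2), of 2 M z "seg z t"]
          \<rho>(4) elim(1) t
        by (auto simp: h'_def h''_def eval_nat_numeral less_imp_le)
      also have "\<dots> \<le> M * norm (h z) ^ 3 / 2"
        using power_mono[OF norm_of_real_mult_le[OF t, of "h z"], of 3] \<rho>(3)
        by (simp add: seg_minus mult_left_mono)
      finally have "norm D / norm (h z) \<le> M/2 * norm (h z * h z)"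
        using \<open>h z \<noteq> 0\<close> by (simp add: divide_le_eq norm_mult power3_eq_cube mult_ac)
      moreover have "ratio z t - (1 + of_real t * h' z + (of_real t)^2 * (h z * h'' z) / 2) = D / h z"
        using \<open>h z \<noteq> 0\<close> by (simp add: ratio_def D_def seg_minus field_simps power2_eq_square)
      ultimately show "norm (ratio z t - (1 + of_real t * h' z + (of_real t)^2 * (h z * h'' z) / 2))
          \<le> M/2 * norm (h z * h z)"
        by (simp add: norm_divide)
    qed
  qed
  then show ?thesis by (rule uniform_O_bound[OF _ uniform_O_h_h])
qed

lemma uniform_O_h'_seg: "uniform_O p q (\<lambda>z t. h' (seg z t))"
proof -
  have "uniform_O p q (\<lambda>z t. h' z + of_real t * (h z * h'' z)
      + (h' (seg z t) - h' z - of_real t * (h z * h'' z)))"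
    by (intro uniform_O_add uniform_O_h' uniform_O_mono[OF _ uniform_O_param_mult[OF uniform_O_h_h'']]
        uniform_O_mono[OF _ h'_seg_expansion]) auto
  then show ?thesis by simp
qed

lemma eventually_h'_seg_small: "\<forall>\<^sub>F z in at p. \<forall>t\<in>{0..1}. norm (h' (seg z t)) \<le> 1/10"
proof -
  have "(0::real) < 1/10" by simp
  from uniform_limitD[OF uniform_limit_isCont_compose[OF uniform_limit_seg isCont_h'] this]
  show ?thesis by eventually_elim (auto simp: h'_p dist_norm less_imp_le)
qed

lemma buff_factor_seg_expansion:
  "uniform_O p (3 * q) (\<lambda>z t. buff_factor (deriv f (seg z t))
     - (1 + h' (seg z t)/2 - h' (seg z t)^2/12))"
proof -
  have cube: "uniform_O p (3 * q) (\<lambda>z t. h' (seg z t) * h' (seg z t) * h' (seg z t))"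
    using uniform_O_mult[OF uniform_O_mult[OF uniform_O_h'_seg uniform_O_h'_seg] uniform_O_h'_seg]
    by (simp add: numeral_3_eq_3 add.assoc)
  have "\<forall>\<^sub>F z in at p. \<forall>t\<in>{0..1}. norm (buff_factor (deriv f (seg z t))
      - (1 + h' (seg z t)/2 - h' (seg z t)^2/12)) \<le> 66 * norm (h' (seg z t) * h' (seg z t) * h' (seg z t))"
    using eventually_h'_seg_small eventually_seg_in_ball[OF r_pos]
  proof eventually_elim
    case (elim z)
    show ?case
    proof
      fix t :: real assume t: "t \<in> {0..1}"
      then have "seg z t \<in> U" using elim(2) ball_subset_U by auto
      then have "deriv f (seg z t) = 1 + h' (seg z t)" by (simp add: h'_eq_deriv_f)
      then show "norm (buff_factor (deriv f (seg z t)) - (1 + h' (seg z t)/2 - h' (seg z t)^2/12))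
          \<le> 66 * norm (h' (seg z t) * h' (seg z t) * h' (seg z t))"
        using buff_factor_1_plus_Taylor_bound[of "h' (seg z t)"] elim(1) t
        by (simp add: norm_mult power3_eq_cube)
    qed
  qed
  then show ?thesis by (rule uniform_O_bound[OF _ cube])
qed

definition "expansion_quad z t = of_real t * (h z * h'' z)/2 - (h' z)^2/12 - of_real t * (h' z)^2/2
   + (of_real t)^2 * (h' z)^2 - (of_real t)^2 * (h z * h'' z)/2"

definition "expansion z t = (1/2 - of_real t) * h' z + expansion_quad z t"

lemma uniform_O_expansion_quad: "uniform_O p (2 * q) expansion_quad"
proof -
  have hh'': "uniform_O p (2 * q) (\<lambda>z t. of_real t * (h z * h'' z))"
    by (rule uniform_O_param_mult[OF uniform_O_h_h''])
  have h'h': "uniform_O p (2 * q) (\<lambda>z t. h' z * h' z)"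
    using uniform_O_mult[OF uniform_O_h' uniform_O_h'] by (simp add: mult_2)
  have "uniform_O p (2 * q) (\<lambda>z t. of_real t * (h z * h'' z) / 2 - h' z * h' z / 12
     - of_real t * (h' z * h' z) / 2 + of_real t * (of_real t * (h' z * h' z))
     - of_real t * (of_real t * (h z * h'' z)) / 2)"
    by (intro uniform_O_diff uniform_O_add uniform_O_divide_const uniform_O_param_mult hh'' h'h')
  then show ?thesis unfolding expansion_quad_def[abs_def] by (simp add: power2_eq_square mult_ac)
qed

lemma uniform_O_expansion: "uniform_O p q expansion"
proof -
  have "uniform_O p q (\<lambda>z t. h' z / 2 - of_real t * h' z + expansion_quad z t)"
    by (intro uniform_O_add uniform_O_diff uniform_O_divide_const uniform_O_param_mult uniform_O_h'
        uniform_O_mono[OF _ uniform_O_expansion_quad]) simp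
  then show ?thesis by (simp add: expansion_def[abs_def] left_diff_distrib)
qed

lemma buff_factor_ratio_expansion:
  "uniform_O p (2 * q + 1) (\<lambda>z t. buff_factor (deriv f (seg z t)) - (1 + expansion z t) * ratio z t)"
proof -
  define X where "X z t = h' (seg z t)" for z t
  have X_minus: "uniform_O p (2 * q) (\<lambda>z t. X z t - h' z)"
  proof -
    have "uniform_O p (2 * q) (\<lambda>z t. of_real t * (h z * h'' z)
        + (X z t - h' z - of_real t * (h z * h'' z)))"
      by (intro uniform_O_add uniform_O_param_mult uniform_O_h_h''
          uniform_O_mono[OF _ h'_seg_expansion[folded X_def]]) simp
    then show ?thesis by simp
  qed
  have X_plus: "uniform_O p q (\<lambda>z t. X z t + h' z)"
    by (rule uniform_O_add[OF uniform_O_h'_seg[folded X_def] uniform_O_h'])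
  have tthh: "uniform_O p (2 * q) (\<lambda>z t. of_real t * of_real t * (h z * h'' z))"
    using uniform_O_param_mult[OF uniform_O_param_mult[OF uniform_O_h_h'']] by (simp add: mult.assoc)
  have O1: "uniform_O p (2 * q + 1) (\<lambda>z t. buff_factor (deriv f (seg z t)) - (1 + X z t/2 - (X z t)^2/12))"
    by (rule uniform_O_mono[OF _ buff_factor_seg_expansion[folded X_def]]) (use q_pos in simp)
  have O2: "uniform_O p (2 * q + 1) (\<lambda>z t. X z t - h' z - of_real t * (h z * h'' z))"
    by (rule uniform_O_mono[OF _ h'_seg_expansion[folded X_def]]) simp
  have O3: "uniform_O p (2 * q + 1) (\<lambda>z t. (X z t - h' z) * (X z t + h' z))"
    by (rule uniform_O_mono[OF _ uniform_O_mult[OF X_minus X_plus]]) (use q_pos in simp)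
  have O4: "uniform_O p (2 * q + 1) (\<lambda>z t. expansion_quad z t * (of_real t * h' z))"
    by (rule uniform_O_mono[OF _ uniform_O_mult[OF uniform_O_expansion_quad
        uniform_O_param_mult[OF uniform_O_h']]]) (use q_pos in simp)
  have O5: "uniform_O p (2 * q + 1) (\<lambda>z t. expansion z t * (of_real t * of_real t * (h z * h'' z)))"
    by (rule uniform_O_mono[OF _ uniform_O_mult[OF uniform_O_expansion tthh]]) (use q_pos in simp)
  have O6: "uniform_O p (2 * q + 1) (\<lambda>z t. (1 + expansion z t)
      * (ratio z t - (1 + of_real t * h' z + (of_real t)^2 * (h z * h'' z) / 2)))"
    by (rule uniform_O_mono[OF _ uniform_O_mult[OF uniform_O_add[OF uniform_O_const
        uniform_O_mono[OF _ uniform_O_expansion]] ratio_expansion]]) simp_all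
  have identity: "buff_factor (deriv f (seg z t)) - (1 + expansion z t) * ratio z t =
      (buff_factor (deriv f (seg z t)) - (1 + X z t/2 - (X z t)^2/12))
      + (X z t - h' z - of_real t * (h z * h'' z)) / 2 - (X z t - h' z) * (X z t + h' z) / 12
      - expansion_quad z t * (of_real t * h' z)
      - expansion z t * (of_real t * of_real t * (h z * h'' z)) / 2
      - (1 + expansion z t) * (ratio z t - (1 + of_real t * h' z + (of_real t)^2 * (h z * h'' z) / 2))"
    for z t
    unfolding expansion_def by (rule buff_expansion_identity) (simp add: expansion_quad_def)
  show ?thesis
    unfolding identity by (intro O1 O2 O3 O4 O5 O6 uniform_O_add uniform_O_diff uniform_O_divide_const)
qed

lemma integrand_expansion: "uniform_O p (2 * q + 1) (\<lambda>z t. integrand z t - 1 - expansion z t)"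
proof (rule uniform_O_cong[OF _ uniform_O_divide[OF buff_factor_ratio_expansion]])
  show "0 < kappa/2" using kappa_pos by simp
  show "\<forall>\<^sub>F z in at p. \<forall>t\<in>{0..1}. kappa/2 \<le> norm (ratio z t)"
    by (rule eventually_norm_ratio_ge)
  show "\<forall>\<^sub>F z in at p. \<forall>t\<in>{0..1}. integrand z t - 1 - expansion z t =
      (buff_factor (deriv f (seg z t)) - (1 + expansion z t) * ratio z t) / ratio z t"
    using eventually_norm_ratio_ge
  proof eventually_elim
    case (elim z)
    show ?case
    proof
      fix t :: real assume "t \<in> {0..1}"
      then have "ratio z t \<noteq> 0" using elim kappa_pos by fastforce
      then show "integrand z t - 1 - expansion z t =
          (buff_factor (deriv f (seg z t)) - (1 + expansion z t) * ratio z t) / ratio z t"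
        by (simp add: integrand_eq field_simps)
    qed
  qed
qed

lemma expansion_has_integral: "(expansion z has_integral h z * h'' z / 12) {0..1}"
proof -
  define c0 where "c0 = h' z/2 - (h' z)^2/12"
  define c1 where "c1 = (h z * h'' z)/2 - h' z - (h' z)^2/2"
  define c2 where "c2 = (h' z)^2 - (h z * h'' z)/2"
  define F where "F x = c0 * x + c1 * x^2/2 + c2 * x^3/3" for x :: complex
  have "(F has_field_derivative (c0 + c1 * x + c2 * x^2)) (at x)" for x
    unfolding F_def by (auto intro!: derivative_eq_intros simp: field_simps power2_eq_square)
  then have "((\<lambda>t. c0 + c1 * of_real t + c2 * (of_real t)^2) has_integral
      F (of_real 1) - F (of_real 0)) {0..1}"
    by (intro fundamental_theorem_of_calculus) (auto intro!: has_vector_derivative_real_field)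
  moreover have "F (of_real 1) - F (of_real 0) = h z * h'' z / 12"
    by (simp add: F_def c0_def c1_def c2_def field_simps power2_eq_square)
  moreover have "expansion z = (\<lambda>t. c0 + c1 * of_real t + c2 * (of_real t)^2)"
    by (auto simp: expansion_def expansion_quad_def c0_def c1_def c2_def algebra_simps)
  ultimately show ?thesis by (simp only:)
qed

lemma u_expansion: "uniform_O p (2 * q + 1) (\<lambda>z t. u z - h z * h'' z / 12)"
proof -
  obtain K where K: "0 \<le> K"
    "\<forall>\<^sub>F z in at p. \<forall>t\<in>{0..1}. norm (integrand z t - 1 - expansion z t) \<le> K * norm (z - p) ^ (2 * q + 1)"
    using uniform_OE[OF integrand_expansion] by blast
  have "\<forall>\<^sub>F z in at p. \<forall>t\<in>{0..1::real}. norm (u z - h z * h'' z / 12) \<le> K * norm (z - p) ^ (2 * q + 1)"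
    using K(2) eventually_admissible
  proof eventually_elim
    case (elim z)
    have "integrand z integrable_on {0..1}"
      using continuous_on_integrand[OF elim(2)] by (rule integrable_continuous_interval)
    then have I: "((\<lambda>t. integrand z t - 1 - expansion z t) has_integral u z - h z * h'' z / 12) {0..1}"
      using has_integral_diff[OF has_integral_diff[OF integrable_integral
          has_integral_const_real[of "1::complex" 0 1]] expansion_has_integral]
      by (simp add: u_def)
    have "norm (u z - h z * h'' z / 12) \<le> K * norm (z - p) ^ (2 * q + 1)
        * Henstock_Kurzweil_Integration.content (cbox (0::real) 1)"
      by (rule has_integral_bound[of _ "\<lambda>t. integrand z t - 1 - expansion z t"])
         (use I elim(1) K(1) in auto)
    then show ?case by simp
  qed
  then show ?thesis by (rule uniform_OI)
qed

lemma tendsto_u_ext_divide: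
  "((\<lambda>z. u_ext z / (z - p) ^ (2 * q)) \<longlongrightarrow> of_nat (q + 1) * of_nat q * e p ^ 2 / 12) (at p)"
proof -
  have "((\<lambda>z. (u z - h z * h'' z / 12) / (z - p) ^ (2 * q) + h z * h'' z / (z - p) ^ (2 * q) / 12)
      \<longlongrightarrow> 0 + of_nat (q + 1) * of_nat q * e p ^ 2 / 12) (at p)"
    using u_expansion by (intro tendsto_intros uniform_O_Suc_imp_tendsto_divide tendsto_h_h''_div) simp_all
  moreover have "\<forall>\<^sub>F z in at p. (u z - h z * h'' z / 12) / (z - p) ^ (2 * q)
      + h z * h'' z / (z - p) ^ (2 * q) / 12 = u_ext z / (z - p) ^ (2 * q)"
    by (auto simp: eventually_at_filter u_ext_def diff_divide_distrib divide_divide_eq_left mult.commute)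
  ultimately show ?thesis by (simp add: Lim_transform_eventually)
qed

lemma zero_of_order_u_ext: "zero_of_order u_ext p (2 * q)"
proof -
  obtain r where r: "0 < r" "u_ext holomorphic_on ball p r" by (rule holomorphic_u_ext)
  have "(of_nat (q + 1) :: complex) \<noteq> 0" "(of_nat q :: complex) \<noteq> 0"
    using q_pos by (simp_all only: of_nat_eq_0_iff)
  then have "of_nat (q + 1) * of_nat q * e p ^ 2 / 12 \<noteq> 0"
    using e_p by simp
  from zero_of_orderI_tendsto[OF r tendsto_u_ext_divide this] show ?thesis .
qed

end

context buff_isolated_fixed_point
begin

lemma zero_of_order_u_ext_if_multiple:
  assumes "0 < q" and "zero_of_order (\<lambda>z. f z - z) p (q + 1)"
  shows "zero_of_order u_ext p (2 * q)"
proof -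
  obtain r e where "0 < r" "e holomorphic_on ball p r" "e p \<noteq> 0"
      and e: "\<forall>w\<in>ball p r. f w - w = (w - p) ^ (q + 1) * e w"
    using assms(2) unfolding zero_of_order_def by blast
  moreover obtain r0 where "0 < r0" "ball p r0 \<subseteq> U"
    using open_U p_in_U open_contains_ball by blast
  ultimately interpret buff_parabolic_fixed_point f U p q e "min r r0"
    by unfold_locales (use assms(1) in \<open>auto intro: holomorphic_on_subset\<close>)
  show ?thesis by (rule zero_of_order_u_ext)
qed

end

theorem lemma3p4:
  fixes U :: "complex set" and f :: "complex \<Rightarrow> complex" and p :: complex
  assumes "open U" and "connected U" and "bounded U" and "convex U"
    and "smooth_jordan_curve (frontier U)"
    and "\<exists>W. open W \<and> closure U \<subseteq> W \<and> f holomorphic_on W"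
    and "\<forall>z\<in>U. Re (deriv f z) > 0"
    and "\<forall>z\<in>frontier U. f z \<noteq> z"
    and "p \<in> U" and "f p = p"
  shows "\<exists>r>0. \<exists>g. g holomorphic_on ball p r \<and> g p = 0 \<and>
           (\<forall>z\<in>ball p r \<inter> Vstar U f. g z = buff_u f z) \<and>
           (\<forall>q::nat. q \<ge> 1 \<and> deriv f p = 1 \<and> zero_of_order (\<lambda>z. f z - z) p (q + 1)
               \<longrightarrow> zero_of_order g p (2 * q))"
proof -
  have holo: "f holomorphic_on U"
    using assms(6) closure_subset by (blast intro: holomorphic_on_subset)
  then have analytic: "(\<lambda>z. f z - z) analytic_on {p}"
    using assms(1,9) by (intro holomorphic_on_imp_analytic_at holomorphic_intros)
  show ?thesis
  proof (cases "isolated_zero (\<lambda>z. f z - z) p")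
    case True
    then have "\<forall>\<^sub>F z in at p. f z \<noteq> z" by (simp add: isolated_zero_analytic_iff[OF analytic])
    then interpret buff_isolated_fixed_point f U p
      by unfold_locales (use assms holo in auto)
    obtain r where "0 < r" "u_ext holomorphic_on ball p r" by (rule holomorphic_u_ext)
    then show ?thesis
      using zero_of_order_u_ext_if_multiple assms(10)
      by (intro exI[of _ r] exI[of _ u_ext]) (auto simp: u_ext_def Vstar_def buff_u_eq)
  next
    case False
    then have "\<forall>\<^sub>F z in at p. f z - z = 0"
      using non_isolated_zero_imp_eventually_zero[OF analytic] assms(10) by simp
    then obtain r where "0 < r" and r: "\<forall>z. z \<noteq> p \<and> dist z p < r \<longrightarrow> f z = z"
      by (auto simp: eventually_at)
    moreover from r have "\<forall>z\<in>ball p r. f z = z"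
      using assms(10) by (auto simp: dist_commute)
    ultimately show ?thesis
      using not_zero_of_order_if_eventually_zero \<open>\<forall>\<^sub>F z in at p. f z - z = 0\<close>
      by (intro exI[of _ r] conjI exI[of _ "\<lambda>_. 0"]) (auto simp: Vstar_def)
  qed
qed

end
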